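(* Let $\mathcal U$ be a non-principal ultrafilter on $\mathbb N$ and let $\mathcal A$ be a unital Banach algebra such that the ultrapower $(\mathcal A)_{\mathcal U}$ is purely infinite. Then $\mathcal A$ is purely infinite.
   Context: A complex unital algebra $\mathcal B$ is purely infinite if it is not a division algebra and for every non-zero $a\in\mathcal B$ there exist $b,c\in\mathcal B$ with $bac=1_{\mathcal B}$. For an ultrafilter $\mathcal U$ on $\mathbb N$, the ultrapower is $(\mathcal A)_{\mathcal U}=\ell^\infty(\mathcal A)/c_{\mathcal U}(\mathcal A)$, where $\ell^\infty(\mathcal A)$ is the Banach algebra of bounded sequences in $\mathcal A$ with pointwise operations and sup norm, and $c_{\mathcal U}(\mathcal A)$ is the closed ideal of sequences $(a_n)$ with $\lim_{n\to\mathcal U}\|a_n\|=0$. *)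

theory Defs
  imports "HOL-Analysis.Analysis" "HOL-Algebra.QuotRing"
begin

class complex_banach_algebra_1 = banach + real_normed_algebra_1 +
  fixes scaleC :: "complex \<Rightarrow> 'a \<Rightarrow> 'a"
  assumes scaleC_add_right: "scaleC a (x + y) = scaleC a x + scaleC a y"
    and scaleC_add_left: "scaleC (a + b) x = scaleC a x + scaleC b x"
    and scaleC_scaleC: "scaleC a (scaleC b x) = scaleC (a * b) x"
    and scaleC_one: "scaleC 1 x = x"
    and scaleC_of_real: "scaleC (complex_of_real r) x = scaleR r x"
    and norm_scaleC: "norm (scaleC a x) = cmod a * norm x"
    and mult_scaleC_left: "scaleC a x * y = scaleC a (x * y)"
    and mult_scaleC_right: "x * scaleC a y = scaleC a (x * y)"

definition ultrafilter :: "'i filter \<Rightarrow> bool" where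
  "ultrafilter F \<longleftrightarrow> F \<noteq> bot \<and> (\<forall>P. eventually P F \<or> eventually (\<lambda>x. \<not> P x) F)"

definition nonprincipal :: "'i filter \<Rightarrow> bool" where
  "nonprincipal F \<longleftrightarrow> (\<forall>k. \<not> eventually (\<lambda>x. x = k) F)"

definition division_ring :: "('a, 'b) ring_scheme \<Rightarrow> bool" where
  "division_ring R \<longleftrightarrow> ring R \<and> \<one>\<^bsub>R\<^esub> \<noteq> \<zero>\<^bsub>R\<^esub> \<and>
     (\<forall>a \<in> carrier R. a \<noteq> \<zero>\<^bsub>R\<^esub> \<longrightarrow> a \<in> Units R)"

definition purely_infinite :: "('a, 'b) ring_scheme \<Rightarrow> bool" where
  "purely_infinite R \<longleftrightarrow> \<not> division_ring R \<and>
     (\<forall>a \<in> carrier R. a \<noteq> \<zero>\<^bsub>R\<^esub> \<longrightarrow>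
        (\<exists>b \<in> carrier R. \<exists>c \<in> carrier R. b \<otimes>\<^bsub>R\<^esub> a \<otimes>\<^bsub>R\<^esub> c = \<one>\<^bsub>R\<^esub>))"

definition univ_ring :: "'a::ring_1 ring" where
  "univ_ring = \<lparr>carrier = UNIV, monoid.mult = (*), one = 1, zero = 0, add = (+)\<rparr>"

definition ell_infty :: "(nat \<Rightarrow> 'a::real_normed_algebra_1) ring" where
  "ell_infty = \<lparr>carrier = {x. bounded (range x)},
      monoid.mult = (\<lambda>x y n. x n * y n), one = (\<lambda>n. 1),
      zero = (\<lambda>n. 0), add = (\<lambda>x y n. x n + y n)\<rparr>"

definition c_U :: "nat filter \<Rightarrow> (nat \<Rightarrow> 'a::real_normed_algebra_1) set" where
  "c_U U = {x \<in> carrier ell_infty. ((\<lambda>n. norm (x n)) \<longlongrightarrow> 0) U}"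

definition ultrapower :: "nat filter \<Rightarrow> ((nat \<Rightarrow> 'a::real_normed_algebra_1) set) ring" where
  "ultrapower U = ell_infty Quot c_U U"

end

theory Submission
  imports Defs
begin

(* If a \<noteq> 0 in A, the constant sequence a is nonzero in the ultrapower, so b a c = 1 there
   lifts to bounded sequences with b\<^sub>n a c\<^sub>n \<rightarrow> 1 along U. For one n the element
   b\<^sub>n a c\<^sub>n lies within distance 1 of 1, and a Neumann series makes it right invertible.
   If A were moreover a division ring, the same lifting for any nonzero class x of the
   ultrapower gives, U-eventually, x\<^sub>n\<^sup>-\<^sup>1 = c\<^sub>n (b\<^sub>n x\<^sub>n c\<^sub>n)\<^sup>-\<^sup>1 b\<^sub>n with
   \<parallel>(b\<^sub>n x\<^sub>n c\<^sub>n)\<^sup>-\<^sup>1\<parallel> \<le> 2, a bounded sequence inverting x. Then the ultrapower would be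
   a division ring, which a purely infinite ring is not. *)

lemma right_inverse_if_norm_one_minus_less:
  fixes x :: "'a::{banach, real_normed_algebra_1}"
  assumes "norm (1 - x) < 1"
  shows "\<exists>w. x * w = 1"
proof -
  define y where "y = 1 - x"
  have "summable (\<lambda>k. norm y ^ k)" using assms by (simp add: y_def summable_geometric)
  then have sm: "summable (\<lambda>k. y ^ k)"
    by (rule summable_comparison_test'[of _ 0]) (simp add: norm_power_ineq)
  define s where "s = (\<Sum>k. y ^ k)"
  have "y * s = (\<Sum>k. y ^ Suc k)"
    unfolding s_def using suminf_mult[OF sm, of y] by simp
  also have "\<dots> = s - 1" unfolding s_def using suminf_split_head[OF sm] by simp
  finally have "x * s = 1" by (simp add: y_def algebra_simps)
  then show ?thesis ..
qed

lemma norm_right_inverse_le: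
  fixes x w :: "'a::real_normed_algebra_1"
  assumes "x * w = 1" "norm (1 - x) < 1"
  shows "norm w \<le> 1 / (1 - norm (1 - x))"
proof -
  have "w = 1 + (1 - x) * w" using assms(1) by (simp add: algebra_simps)
  then have "norm w \<le> 1 + norm (1 - x) * norm w"
    by (metis norm_mult_ineq norm_one norm_triangle_le add_left_mono)
  then have "norm w * (1 - norm (1 - x)) \<le> 1" by (simp add: algebra_simps)
  then show ?thesis using assms(2) by (simp add: field_simps)
qed

lemma mult_eq_one_commute_if_left_invertible:
  fixes a b :: "'a::ring_1"
  assumes "\<forall>z::'a. z \<noteq> 0 \<longrightarrow> (\<exists>z'. z' * z = 1)" and ab: "a * b = 1"
  shows "b * a = 1"
proof (cases "a = 0")
  case True
  then show ?thesis using ab by simp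
next
  case False
  then obtain a' where a': "a' * a = 1" using assms(1) by blast
  have "b = (a' * a) * b" by (simp add: a')
  also have "\<dots> = a'" by (simp add: mult.assoc ab)
  finally show ?thesis using a' by simp
qed

lemma ell_infty_carrier_iff:
  "x \<in> carrier (ell_infty :: (nat \<Rightarrow> 'a::real_normed_algebra_1) ring) \<longleftrightarrow> (\<exists>B. \<forall>n. norm (x n) \<le> B)"
  by (auto simp: ell_infty_def bounded_iff)

lemma ell_infty_simps [simp]:
  "x \<otimes>\<^bsub>ell_infty\<^esub> y = (\<lambda>n. x n * y n)"
  "x \<oplus>\<^bsub>ell_infty\<^esub> y = (\<lambda>n. x n + y n)"
  "\<one>\<^bsub>ell_infty\<^esub> = (\<lambda>n. 1)"
  "\<zero>\<^bsub>ell_infty\<^esub> = (\<lambda>n. 0)"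
  by (simp_all add: ell_infty_def)

lemma ring_ell_infty: "ring (ell_infty :: (nat \<Rightarrow> 'a::real_normed_algebra_1) ring)"
proof -
  have add_closed: "\<exists>D. \<forall>n. norm (x n + y n) \<le> D"
    if "\<forall>n. norm (x n) \<le> B" "\<forall>n. norm (y n) \<le> C" for x y :: "nat \<Rightarrow> 'a" and B C
    using that by (meson add_mono norm_triangle_ineq order_trans)
  have mult_closed: "\<exists>D. \<forall>n. norm (x n * y n) \<le> D"
    if "\<forall>n. norm (x n) \<le> B" "\<forall>n. norm (y n) \<le> C" for x y :: "nat \<Rightarrow> 'a" and B C
    using that by (meson mult_mono norm_ge_zero norm_mult_ineq order_trans)
  show ?thesis
  proof (rule ringI)
    show "abelian_group (ell_infty :: (nat \<Rightarrow> 'a) ring)"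
    proof (rule abelian_groupI)
      fix x :: "nat \<Rightarrow> 'a" assume "x \<in> carrier ell_infty"
      then show "\<exists>y\<in>carrier ell_infty. y \<oplus>\<^bsub>ell_infty\<^esub> x = \<zero>\<^bsub>ell_infty\<^esub>"
        by (intro bexI[of _ "\<lambda>n. - x n"]) (auto simp: ell_infty_carrier_iff)
    qed (auto simp: ell_infty_carrier_iff algebra_simps intro: add_closed)
    show "monoid (ell_infty :: (nat \<Rightarrow> 'a) ring)"
      by (rule monoidI) (auto simp: ell_infty_carrier_iff algebra_simps intro: mult_closed)
  qed (auto simp: ell_infty_carrier_iff algebra_simps)
qed

lemma ell_infty_uminus:
  assumes "x \<in> carrier ell_infty"
  shows "\<ominus>\<^bsub>ell_infty\<^esub> x = (\<lambda>n. - x n :: 'a::real_normed_algebra_1)"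
proof -
  interpret ring "ell_infty :: (nat \<Rightarrow> 'a) ring" by (rule ring_ell_infty)
  show ?thesis
    using assms by (intro minus_equality) (auto simp: ell_infty_carrier_iff)
qed

lemma ell_infty_minus:
  assumes "x \<in> carrier ell_infty" "y \<in> carrier ell_infty"
  shows "x \<ominus>\<^bsub>ell_infty\<^esub> y = (\<lambda>n. x n - y n :: 'a::real_normed_algebra_1)"
  using assms(2) by (simp add: a_minus_def ell_infty_uminus)

lemma Bfun_if_ell_infty:
  assumes "x \<in> carrier ell_infty"
  shows "Bfun x F"
proof -
  obtain B where "\<forall>n. norm (x n) \<le> B" using assms by (auto simp: ell_infty_carrier_iff)
  then show ?thesis by (intro BfunI[of _ B]) simp
qed

lemma c_U_iff: "x \<in> c_U U \<longleftrightarrow> x \<in> carrier ell_infty \<and> (x \<longlongrightarrow> 0) U"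
  by (simp add: c_U_def tendsto_norm_zero_iff)

lemma ideal_c_U: "ideal (c_U U) (ell_infty :: (nat \<Rightarrow> 'a::real_normed_algebra_1) ring)"
proof -
  interpret ell: ring "ell_infty :: (nat \<Rightarrow> 'a) ring" by (rule ring_ell_infty)
  note Zfun_mult = bounded_bilinear.Zfun_prod_Bfun[OF bounded_bilinear_mult]
    bounded_bilinear.Bfun_prod_Zfun[OF bounded_bilinear_mult]
  show ?thesis
  proof (rule idealI[OF ring_ell_infty])
    show "subgroup (c_U U) (add_monoid (ell_infty :: (nat \<Rightarrow> 'a) ring))"
    proof (rule ell.add.subgroupI)
      show "c_U U \<subseteq> carrier (ell_infty :: (nat \<Rightarrow> 'a) ring)" by (auto simp: c_U_iff)
      have "(\<lambda>n. 0 :: 'a) \<in> c_U U" using ell.zero_closed by (simp add: c_U_iff)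
      then show "c_U U \<noteq> ({} :: (nat \<Rightarrow> 'a) set)" by blast
    next
      fix a :: "nat \<Rightarrow> 'a" assume "a \<in> c_U U"
      then show "\<ominus>\<^bsub>ell_infty\<^esub> a \<in> c_U U"
        using ell.a_inv_closed[of a] tendsto_minus[of a 0 U] by (simp add: c_U_iff ell_infty_uminus)
    next
      fix a b :: "nat \<Rightarrow> 'a" assume "a \<in> c_U U" "b \<in> c_U U"
      then show "a \<oplus>\<^bsub>ell_infty\<^esub> b \<in> c_U U"
        using ell.add.m_closed[of a b] by (simp add: c_U_iff tendsto_add_zero)
    qed
  next
    fix a x :: "nat \<Rightarrow> 'a" assume a: "a \<in> c_U U" and x: "x \<in> carrier ell_infty"
    have "Zfun a U" using a by (simp add: c_U_iff tendsto_Zfun_iff)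
    moreover have "Bfun x U" using x by (rule Bfun_if_ell_infty)
    ultimately have "((\<lambda>n. x n * a n) \<longlongrightarrow> 0) U" "((\<lambda>n. a n * x n) \<longlongrightarrow> 0) U"
      unfolding tendsto_Zfun_iff by (simp_all add: Zfun_mult)
    then show "x \<otimes>\<^bsub>ell_infty\<^esub> a \<in> c_U U" "a \<otimes>\<^bsub>ell_infty\<^esub> x \<in> c_U U"
      using a x ell.m_closed[of a x] ell.m_closed[of x a] by (simp_all add: c_U_iff)
  qed
qed

lemma eventually_norm_less_if_c_U:
  assumes "x \<in> c_U U" "r > 0"
  shows "eventually (\<lambda>n. norm (x n) < r) U"
  using assms by (auto simp: c_U_def intro: order_tendstoD(2))

lemma c_U_if_eventually_zero:
  assumes "x \<in> carrier ell_infty" "eventually (\<lambda>n. x n = 0) U"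
  shows "(x :: nat \<Rightarrow> 'a::real_normed_algebra_1) \<in> c_U U"
proof -
  have "eventually (\<lambda>n. norm (x n) = 0) U" using assms(2) by (rule eventually_mono) simp
  then show ?thesis using assms(1) by (simp add: c_U_def tendsto_eventually)
qed

lemma const_notin_c_U:
  assumes "U \<noteq> bot" "a \<noteq> 0"
  shows "(\<lambda>n. a :: 'a::real_normed_algebra_1) \<notin> c_U U"
  using assms tendsto_const_iff[of U "norm a" 0] by (simp add: c_U_def)

definition ultraclass :: "nat filter \<Rightarrow> (nat \<Rightarrow> 'a::real_normed_algebra_1) \<Rightarrow> (nat \<Rightarrow> 'a) set" where
  "ultraclass U x = c_U U +>\<^bsub>ell_infty\<^esub> x"

lemma ring_ultrapower: "ring (ultrapower U :: ((nat \<Rightarrow> 'a::real_normed_algebra_1) set) ring)"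
  unfolding ultrapower_def by (rule ideal.quotient_is_ring[OF ideal_c_U])

lemma ultraclass_ring_hom:
  "ultraclass U \<in> ring_hom (ell_infty :: (nat \<Rightarrow> 'a::real_normed_algebra_1) ring) (ultrapower U)"
  using ideal.rcos_ring_hom[OF ideal_c_U] by (simp add: ultraclass_def[abs_def] ultrapower_def)

lemma carrier_ultrapower_iff:
  "X \<in> carrier (ultrapower U :: ((nat \<Rightarrow> 'a::real_normed_algebra_1) set) ring) \<longleftrightarrow>
     (\<exists>x \<in> carrier ell_infty. X = ultraclass U x)"
  by (auto simp: ultrapower_def ultraclass_def FactRing_def A_RCOSETS_def')

lemma ultraclass_eq_iff:
  assumes "x \<in> carrier ell_infty" "y \<in> carrier ell_infty"
  shows "ultraclass U x = ultraclass U y \<longleftrightarrow> (\<lambda>n. x n - y n :: 'a::real_normed_algebra_1) \<in> c_U U"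
  using ring.quotient_eq_iff_same_a_r_cos[OF ring_ell_infty ideal_c_U assms]
  by (simp add: ultraclass_def ell_infty_minus[OF assms])

lemma ultraclass_eq_zero_iff:
  assumes "x \<in> carrier ell_infty"
  shows "ultraclass U x = \<zero>\<^bsub>ultrapower U\<^esub> \<longleftrightarrow> (x :: nat \<Rightarrow> 'a::real_normed_algebra_1) \<in> c_U U"
  using ultraclass_eq_iff[OF assms, of "\<lambda>n. 0" U] ring_hom_zero[OF ultraclass_ring_hom ring_ell_infty ring_ultrapower]
  by (auto simp: ell_infty_carrier_iff)

lemma ultraclass_in_Units:
  fixes x y :: "nat \<Rightarrow> 'a::real_normed_algebra_1"
  assumes "x \<in> carrier ell_infty" "y \<in> carrier ell_infty"
    and "eventually (\<lambda>n. x n * y n = 1 \<and> y n * x n = 1) U"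
  shows "ultraclass U x \<in> Units (ultrapower U)"
proof -
  interpret ell: ring "ell_infty :: (nat \<Rightarrow> 'a) ring" by (rule ring_ell_infty)
  note hom = ultraclass_ring_hom[of U, where 'a='a]
  have inverse: "ultraclass U p \<otimes>\<^bsub>ultrapower U\<^esub> ultraclass U q = \<one>\<^bsub>ultrapower U\<^esub>"
    if p: "p \<in> carrier ell_infty" and q: "q \<in> carrier ell_infty"
      and pq_one: "eventually (\<lambda>n. p n * q n = 1) U" for p q :: "nat \<Rightarrow> 'a"
  proof -
    have pq: "(\<lambda>n. p n * q n) \<in> carrier ell_infty" using ell.m_closed[OF p q] by simp
    have one: "(\<lambda>n. 1) \<in> carrier (ell_infty :: (nat \<Rightarrow> 'a) ring)" using ell.one_closed by simp
    have "(\<lambda>n. p n * q n - 1) \<in> c_U U"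
    proof (rule c_U_if_eventually_zero)
      show "(\<lambda>n. p n * q n - 1) \<in> carrier ell_infty"
        using ell.minus_closed[OF pq one] by (simp add: ell_infty_minus[OF pq one])
      show "eventually (\<lambda>n. p n * q n - 1 = 0) U" using pq_one by (rule eventually_mono) simp
    qed
    then have "ultraclass U (\<lambda>n. p n * q n) = ultraclass U (\<lambda>n. 1)"
      using ultraclass_eq_iff[OF pq one] by simp
    then show ?thesis using p q ring_hom_mult[OF hom p q] ring_hom_one[OF hom] by simp
  qed
  have "eventually (\<lambda>n. x n * y n = 1) U" "eventually (\<lambda>n. y n * x n = 1) U"
    using assms(3) by (auto elim: eventually_mono)
  then have "ultraclass U x \<otimes>\<^bsub>ultrapower U\<^esub> ultraclass U y = \<one>\<^bsub>ultrapower U\<^esub>"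
    "ultraclass U y \<otimes>\<^bsub>ultrapower U\<^esub> ultraclass U x = \<one>\<^bsub>ultrapower U\<^esub>"
    using assms(1,2) by (simp_all add: inverse)
  moreover have "ultraclass U x \<in> carrier (ultrapower U)" "ultraclass U y \<in> carrier (ultrapower U)"
    using assms(1,2) by (simp_all add: ring_hom_closed[OF hom])
  ultimately show ?thesis
    unfolding Units_def by (intro CollectI conjI bexI[of _ "ultraclass U y"])
qed

definition sandwich_one :: "('a, 'b) ring_scheme \<Rightarrow> bool" where
  "sandwich_one R \<longleftrightarrow> (\<forall>a \<in> carrier R. a \<noteq> \<zero>\<^bsub>R\<^esub> \<longrightarrow>
     (\<exists>b \<in> carrier R. \<exists>c \<in> carrier R. b \<otimes>\<^bsub>R\<^esub> a \<otimes>\<^bsub>R\<^esub> c = \<one>\<^bsub>R\<^esub>))"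

lemma purely_infinite_iff: "purely_infinite R \<longleftrightarrow> \<not> division_ring R \<and> sandwich_one R"
  by (simp add: purely_infinite_def sandwich_one_def)

lemma division_ring_univ_ringD:
  assumes "division_ring (univ_ring :: 'a::ring_1 ring)"
  shows "\<forall>a::'a. a \<noteq> 0 \<longrightarrow> (\<exists>a'. a' * a = 1)"
proof (intro allI impI)
  fix a :: 'a assume "a \<noteq> 0"
  then have "a \<in> Units univ_ring"
    using assms by (simp add: division_ring_def univ_ring_def)
  then show "\<exists>a'. a' * a = 1" by (auto simp: Units_def univ_ring_def)
qed

lemma sandwich_one_ultrapowerE:
  fixes x :: "nat \<Rightarrow> 'a::real_normed_algebra_1"
  assumes "sandwich_one (ultrapower U :: ((nat \<Rightarrow> 'a) set) ring)"
    and x: "x \<in> carrier ell_infty" "x \<notin> c_U U"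
  obtains b c where "b \<in> carrier ell_infty" "c \<in> carrier ell_infty"
    "(\<lambda>n. b n * x n * c n - 1) \<in> c_U U"
proof -
  let ?Q = "ultrapower U :: ((nat \<Rightarrow> 'a) set) ring"
  interpret ell: ring "ell_infty :: (nat \<Rightarrow> 'a) ring" by (rule ring_ell_infty)
  note hom = ultraclass_ring_hom[of U, where 'a='a]
  have "ultraclass U x \<in> carrier ?Q" "ultraclass U x \<noteq> \<zero>\<^bsub>?Q\<^esub>"
    using x by (auto simp: carrier_ultrapower_iff ultraclass_eq_zero_iff)
  then obtain B C where BC: "B \<in> carrier ?Q" "C \<in> carrier ?Q" "B \<otimes>\<^bsub>?Q\<^esub> ultraclass U x \<otimes>\<^bsub>?Q\<^esub> C = \<one>\<^bsub>?Q\<^esub>"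
    using assms(1) unfolding sandwich_one_def by blast
  then obtain b c where b: "b \<in> carrier ell_infty" "B = ultraclass U b"
    and c: "c \<in> carrier ell_infty" "C = ultraclass U c"
    by (auto simp: carrier_ultrapower_iff)
  have bxc: "b \<otimes>\<^bsub>ell_infty\<^esub> x \<otimes>\<^bsub>ell_infty\<^esub> c \<in> carrier ell_infty"
    using b c x by (intro ell.m_closed)
  have "ultraclass U (b \<otimes>\<^bsub>ell_infty\<^esub> x \<otimes>\<^bsub>ell_infty\<^esub> c) = ultraclass U \<one>\<^bsub>ell_infty\<^esub>"
    using BC(3) b c x by (simp del: ell_infty_simps add: ring_hom_mult[OF hom] ring_hom_one[OF hom])
  then have "(\<lambda>n. b n * x n * c n - 1) \<in> c_U U"
    using bxc ell.one_closed by (simp add: ultraclass_eq_iff)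
  with b(1) c(1) show thesis by (rule that)
qed

lemma sandwich_one_univ_ring_if_ultrapower:
  assumes "U \<noteq> bot" "sandwich_one (ultrapower U :: ((nat \<Rightarrow> 'a::{banach, real_normed_algebra_1}) set) ring)"
  shows "sandwich_one (univ_ring :: 'a ring)"
proof -
  have "\<exists>b c. b * a * c = 1" if "a \<noteq> 0" for a :: 'a
  proof -
    have a: "(\<lambda>n. a) \<in> carrier ell_infty" "(\<lambda>n. a) \<notin> c_U U"
      using assms(1) that by (auto simp: ell_infty_carrier_iff const_notin_c_U)
    obtain b c where "b \<in> carrier ell_infty" "c \<in> carrier ell_infty"
      and bac: "(\<lambda>n. b n * a * c n - 1) \<in> c_U U"
      by (rule sandwich_one_ultrapowerE[OF assms(2) a])
    have "eventually (\<lambda>n. norm (b n * a * c n - 1) < 1) U"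
      using eventually_norm_less_if_c_U[OF bac] by simp
    then obtain n where "norm (b n * a * c n - 1) < 1"
      using eventually_happens'[OF assms(1)] by blast
    then have "norm (1 - b n * a * c n) < 1" by (simp only: norm_minus_commute)
    then obtain w where "b n * a * c n * w = 1"
      using right_inverse_if_norm_one_minus_less by blast
    then have "b n * a * (c n * w) = 1" by (simp add: mult.assoc)
    then show ?thesis by blast
  qed
  then show ?thesis by (auto simp: sandwich_one_def univ_ring_def)
qed

lemma eventual_inverse_if_division_ring:
  fixes x :: "nat \<Rightarrow> 'a::{banach, real_normed_algebra_1}"
  assumes D: "division_ring (univ_ring :: 'a ring)"
    and b: "b \<in> carrier ell_infty" and c: "c \<in> carrier ell_infty"
    and bxc: "(\<lambda>n. b n * x n * c n - 1) \<in> c_U U"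
  obtains y where "y \<in> carrier ell_infty" "eventually (\<lambda>n. x n * y n = 1 \<and> y n * x n = 1) U"
proof -
  interpret ell: ring "ell_infty :: (nat \<Rightarrow> 'a) ring" by (rule ring_ell_infty)
  note commute = mult_eq_one_commute_if_left_invertible[OF division_ring_univ_ringD[OF D]]
  define P where "P n \<longleftrightarrow> norm (1 - b n * x n * c n) < 1/2" for n
  have "eventually P U"
    unfolding P_def using eventually_norm_less_if_c_U[OF bxc, of "1/2"] by (simp add: norm_minus_commute)
  have "\<forall>n. \<exists>w. P n \<longrightarrow> b n * x n * c n * w = 1 \<and> norm w \<le> 2"
  proof
    fix n
    show "\<exists>w. P n \<longrightarrow> b n * x n * c n * w = 1 \<and> norm w \<le> 2"
    proof (cases "P n")
      case True
      then have small: "norm (1 - b n * x n * c n) < 1/2" by (simp add: P_def)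
      then have "norm (1 - b n * x n * c n) < 1" by simp
      then obtain w where w: "b n * x n * c n * w = 1"
        using right_inverse_if_norm_one_minus_less by blast
      have "norm w \<le> 1 / (1 - norm (1 - b n * x n * c n))"
        using norm_right_inverse_le[OF w] small by simp
      also have "\<dots> \<le> 2" using small by (simp add: divide_le_eq)
      finally show ?thesis using w by blast
    qed simp
  qed
  then obtain w where w: "\<forall>n. P n \<longrightarrow> b n * x n * c n * w n = 1 \<and> norm (w n) \<le> 2"
    using choice[of "\<lambda>n w. P n \<longrightarrow> b n * x n * c n * w = 1 \<and> norm w \<le> 2"] by blast
  define v where "v n = (if P n then w n else 0)" for n
  have v: "v \<in> carrier ell_infty"
    unfolding ell_infty_carrier_iff by (rule exI[of _ 2]) (simp add: v_def w[rule_format])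
  define y where "y n = c n * v n * b n" for n
  have "y \<in> carrier ell_infty"
    using ell.m_closed[OF ell.m_closed[OF c v] b] by (simp add: y_def[abs_def])
  moreover have "x n * y n = 1 \<and> y n * x n = 1" if "P n" for n
  proof -
    have "b n * (x n * c n * w n) = 1" using w that by (simp add: mult.assoc)
    then have "x n * c n * w n * b n = 1" by (rule commute)
    then have "x n * y n = 1" using that by (simp add: y_def v_def mult.assoc)
    then show ?thesis using commute by blast
  qed
  then have "eventually (\<lambda>n. x n * y n = 1 \<and> y n * x n = 1) U"
    using \<open>eventually P U\<close> by (rule eventually_mono[rotated])
  ultimately show thesis by (rule that)
qed

lemma division_ring_ultrapower:
  fixes U :: "nat filter"
  assumes "U \<noteq> bot" and D: "division_ring (univ_ring :: 'a::{banach, real_normed_algebra_1} ring)"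
    and "sandwich_one (ultrapower U :: ((nat \<Rightarrow> 'a) set) ring)"
  shows "division_ring (ultrapower U :: ((nat \<Rightarrow> 'a) set) ring)"
proof -
  let ?Q = "ultrapower U :: ((nat \<Rightarrow> 'a) set) ring"
  have units: "X \<in> Units ?Q" if X: "X \<in> carrier ?Q" "X \<noteq> \<zero>\<^bsub>?Q\<^esub>" for X
  proof -
    obtain x where x: "x \<in> carrier ell_infty" "X = ultraclass U x"
      using X(1) by (auto simp: carrier_ultrapower_iff)
    then have "x \<notin> c_U U" using X(2) by (simp add: ultraclass_eq_zero_iff)
    then obtain b c where b: "b \<in> carrier ell_infty" and c: "c \<in> carrier ell_infty"
      and bxc: "(\<lambda>n. b n * x n * c n - 1) \<in> c_U U"
      by (rule sandwich_one_ultrapowerE[OF assms(3) x(1)])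
    obtain y where "y \<in> carrier ell_infty" "eventually (\<lambda>n. x n * y n = 1 \<and> y n * x n = 1) U"
      by (rule eventual_inverse_if_division_ring[OF D b c bxc])
    then show ?thesis using ultraclass_in_Units[OF x(1)] x(2) by simp
  qed
  have one: "(\<lambda>n. 1) \<in> carrier (ell_infty :: (nat \<Rightarrow> 'a) ring)"
    by (auto simp: ell_infty_carrier_iff)
  have "ultraclass U (\<lambda>n. 1 :: 'a) \<noteq> \<zero>\<^bsub>?Q\<^esub>"
    using const_notin_c_U[OF assms(1) one_neq_zero] by (simp add: ultraclass_eq_zero_iff[OF one])
  then have "\<one>\<^bsub>?Q\<^esub> \<noteq> \<zero>\<^bsub>?Q\<^esub>"
    using ring_hom_one[OF ultraclass_ring_hom[of U, where 'a='a]] by simp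
  with units show ?thesis by (simp add: division_ring_def ring_ultrapower)
qed

theorem corollary2p4:
  fixes U :: "nat filter"
  assumes "ultrafilter U"
    and "nonprincipal U"
    and "purely_infinite (ultrapower U :: ((nat \<Rightarrow> 'a::complex_banach_algebra_1) set) ring)"
  shows "purely_infinite (univ_ring :: 'a ring)"
proof -
  have "U \<noteq> bot" using assms(1) by (simp add: ultrafilter_def)
  from assms(3) have Q: "\<not> division_ring (ultrapower U :: ((nat \<Rightarrow> 'a) set) ring)"
    "sandwich_one (ultrapower U :: ((nat \<Rightarrow> 'a) set) ring)"
    by (simp_all add: purely_infinite_iff)
  have "\<not> division_ring (univ_ring :: 'a ring)"
    using division_ring_ultrapower[OF \<open>U \<noteq> bot\<close> _ Q(2)] Q(1) by blast
  moreover have "sandwich_one (univ_ring :: 'a ring)"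
    by (rule sandwich_one_univ_ring_if_ultrapower[OF \<open>U \<noteq> bot\<close> Q(2)])
  ultimately show ?thesis by (simp add: purely_infinite_iff)
qed

end
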